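(* Let $\mathbb{K}$ be a field of characteristic zero, let $t\in\mathbb{K}\setminus\{0,1\}$, and let $\mathfrak{g}$ be a finite-dimensional non-perfect Lie algebra over $\mathbb{K}$ (i.e. $\mathfrak{g}^{(2)}\neq\mathfrak{g}$). Then there is an injective linear map from $\mathcal{D}(t,1,0)(\mathfrak{g})$ into the centroid $\mathcal{C}(\mathfrak{g})=\mathcal{D}(1,1,0)(\mathfrak{g})$ of $\mathfrak{g}$.
   Context: For a Lie algebra $\mathfrak{g}=(V,\mu)$, the derived algebra $\mathfrak{g}^{(2)}$ is the linear span of all products $\mu(X,Y)$. For $t\in\mathbb{K}$, $\mathcal{D}(t,1,0)(\mathfrak{g})$ denotes the space of linear maps $D:V\to V$ with $tD\mu(X,Y)=\mu(DX,Y)$ for all $X,Y\in V$; in particular the centroid is $\mathcal{D}(1,1,0)(\mathfrak{g})=\{D: D\mu(X,Y)=\mu(DX,Y)\ \forall X,Y\}$. *)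

theory Defs
  imports Complex_Main
begin

definition lie_algebra :: "('k::field \<Rightarrow> 'v::ab_group_add \<Rightarrow> 'v) \<Rightarrow> ('v \<Rightarrow> 'v \<Rightarrow> 'v) \<Rightarrow> bool" where
  "lie_algebra s mu \<longleftrightarrow> vector_space s
     \<and> (\<forall>x. Vector_Spaces.linear s s (mu x)) \<and> (\<forall>y. Vector_Spaces.linear s s (\<lambda>x. mu x y))
     \<and> (\<forall>x. mu x x = 0)
     \<and> (\<forall>x y z. mu x (mu y z) + mu y (mu z x) + mu z (mu x y) = 0)"

definition fin_dim :: "('k::field \<Rightarrow> 'v::ab_group_add \<Rightarrow> 'v) \<Rightarrow> bool" where
  "fin_dim s \<longleftrightarrow> (\<exists>B. finite_dimensional_vector_space s B)"

definition derived_algebra :: "('k::field \<Rightarrow> 'v::ab_group_add \<Rightarrow> 'v) \<Rightarrow> ('v \<Rightarrow> 'v \<Rightarrow> 'v) \<Rightarrow> 'v set" where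
  "derived_algebra s mu = module.span s {mu x y | x y. True}"

definition Dt10 :: "('k::field \<Rightarrow> 'v::ab_group_add \<Rightarrow> 'v) \<Rightarrow> ('v \<Rightarrow> 'v \<Rightarrow> 'v) \<Rightarrow> 'k \<Rightarrow> ('v \<Rightarrow> 'v) set" where
  "Dt10 s mu t = {D. Vector_Spaces.linear s s D \<and> (\<forall>X Y. s t (D (mu X Y)) = mu (D X) Y)}"

definition centroid :: "('k::field \<Rightarrow> 'v::ab_group_add \<Rightarrow> 'v) \<Rightarrow> ('v \<Rightarrow> 'v \<Rightarrow> 'v) \<Rightarrow> ('v \<Rightarrow> 'v) set" where
  "centroid s mu = Dt10 s mu 1"

definition linear_on_maps :: "('k::field \<Rightarrow> 'v::ab_group_add \<Rightarrow> 'v) \<Rightarrow> ('v \<Rightarrow> 'v) set \<Rightarrow> (('v \<Rightarrow> 'v) \<Rightarrow> ('v \<Rightarrow> 'v)) \<Rightarrow> bool" where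
  "linear_on_maps s A phi \<longleftrightarrow>
     (\<forall>D1\<in>A. \<forall>D2\<in>A. phi (\<lambda>x. D1 x + D2 x) = (\<lambda>x. phi D1 x + phi D2 x))
   \<and> (\<forall>a. \<forall>D\<in>A. phi (\<lambda>x. s a (D x)) = (\<lambda>x. s a (phi D x)))"

end

theory Submission
  imports Defs
begin

(*
  Put [x,y] = mu x y and let D satisfy t D[x,y] = [Dx,y].  By antisymmetry also [x,Dy] = t D[x,y],
  so applying D to the Jacobi identity for x, y, z and comparing with the Jacobi identity for
  Dx, y, z gives t(1 - t) D[x,[y,z]] = 0.  Hence for t \<noteq> 0, 1 the map D kills [g,[g,g]], and
  then [D u, y] = t D[u,y] = 0 for every u in the derived algebra g'.  Choosing a linear projection
  Q onto g', the map centroid_lift: D \<mapsto> (1/t) D (1 - Q) + D Q sends D(t,1,0) injectively into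
  the centroid.
*)

definition centroid_lift :: "('k::field \<Rightarrow> 'v::ab_group_add \<Rightarrow> 'v) \<Rightarrow> ('v \<Rightarrow> 'v) \<Rightarrow> 'k \<Rightarrow> ('v \<Rightarrow> 'v) \<Rightarrow> 'v \<Rightarrow> 'v"
  where "centroid_lift s Q t D = (\<lambda>x. s (inverse t) (D (x - Q x)) + D (Q x))"

context vector_space
begin

lemma subspace_linear_projection:
  assumes "subspace G"
  obtains Q where "Vector_Spaces.linear scale scale Q" and "range Q \<subseteq> G" and "\<And>x. x \<in> G \<Longrightarrow> Q x = x"
proof -
  interpret vector_space_pair scale scale ..
  obtain Q where "range Q \<subseteq> G" "Vector_Spaces.linear scale scale Q" "\<forall>x\<in>G. Q (id x) = x"
    using linear_exists_left_inverse_on[OF linear_id assms] by auto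
  then show ?thesis using that by simp
qed

lemma linear_on_maps_centroid_lift: "linear_on_maps scale A (centroid_lift scale Q t)"
  by (auto simp: linear_on_maps_def centroid_lift_def scale_right_distrib algebra_simps)

lemma linear_centroid_lift:
  assumes "Vector_Spaces.linear scale scale Q" and "Vector_Spaces.linear scale scale D"
  shows "Vector_Spaces.linear scale scale (centroid_lift scale Q t D)"
proof -
  interpret Q: Vector_Spaces.linear scale scale Q by fact
  interpret D: Vector_Spaces.linear scale scale D by fact
  show ?thesis
    by (auto simp: Vector_Spaces.linear_iff centroid_lift_def Q.add Q.scale D.add D.scale D.diff
        scale_right_distrib scale_right_diff_distrib algebra_simps vector_space_axioms)
qed

lemma inj_on_centroid_lift:
  assumes "t \<noteq> 0" and "Vector_Spaces.linear scale scale Q" and "\<And>x. Q (Q x) = Q x"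
  shows "inj_on (centroid_lift scale Q t) {D. Vector_Spaces.linear scale scale D}"
proof (rule inj_onI)
  interpret Q: Vector_Spaces.linear scale scale Q by fact
  have recover: "D x = scale t (centroid_lift scale Q t D (x - Q x)) + centroid_lift scale Q t D (Q x)"
    if "Vector_Spaces.linear scale scale D" for D x
  proof -
    interpret D: Vector_Spaces.linear scale scale D by fact
    show ?thesis
      using \<open>t \<noteq> 0\<close> by (simp add: centroid_lift_def Q.diff assms(3) D.diff)
  qed
  fix D1 D2
  assume "D1 \<in> {D. Vector_Spaces.linear scale scale D}" "D2 \<in> {D. Vector_Spaces.linear scale scale D}"
    and "centroid_lift scale Q t D1 = centroid_lift scale Q t D2"
  then show "D1 = D2"
    using recover by (metis mem_Collect_eq ext)
qed

end

locale lie_alg =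
  fixes s :: "'k::field \<Rightarrow> 'v::ab_group_add \<Rightarrow> 'v"
    and mu :: "'v \<Rightarrow> 'v \<Rightarrow> 'v"
  assumes lie_algebra: "lie_algebra s mu"
begin

sublocale vector_space s
  using lie_algebra by (simp add: lie_algebra_def)

lemma linear_bracket_right: "Vector_Spaces.linear s s (mu x)"
  using lie_algebra by (simp add: lie_algebra_def)

lemma linear_bracket_left: "Vector_Spaces.linear s s (\<lambda>x. mu x y)"
  using lie_algebra by (simp add: lie_algebra_def)

lemma bracket_self: "mu x x = 0"
  using lie_algebra by (simp add: lie_algebra_def)

lemma jacobi: "mu x (mu y z) + mu y (mu z x) + mu z (mu x y) = 0"
  using lie_algebra by (simp add: lie_algebra_def)

lemma bracket_antisym: "mu x y = - mu y x"
proof -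
  interpret l: Vector_Spaces.linear s s "mu a" for a by (rule linear_bracket_right)
  interpret r: Vector_Spaces.linear s s "\<lambda>x. mu x b" for b by (rule linear_bracket_left)
  have "0 = mu (x + y) (x + y)" by (simp add: bracket_self)
  also have "\<dots> = mu x x + mu x y + mu y x + mu y y" by (simp add: l.add r.add)
  also have "\<dots> = mu x y + mu y x" by (simp add: bracket_self)
  finally show ?thesis by (simp add: eq_neg_iff_add_eq_0)
qed

lemma Dt10_linear: "D \<in> Dt10 s mu t \<Longrightarrow> Vector_Spaces.linear s s D"
  by (simp add: Dt10_def)

lemma Dt10_bracket: "D \<in> Dt10 s mu t \<Longrightarrow> s t (D (mu x y)) = mu (D x) y"
  by (simp add: Dt10_def)

lemma Dt10_bracket_right:
  assumes "D \<in> Dt10 s mu t"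
  shows "mu x (D y) = s t (D (mu x y))"
proof -
  interpret D: Vector_Spaces.linear s s D by (rule Dt10_linear[OF assms])
  have "mu x (D y) = - s t (D (mu y x))"
    by (simp add: bracket_antisym[of x] Dt10_bracket[OF assms])
  also have "\<dots> = s t (D (mu x y))"
    by (simp add: bracket_antisym[of y] D.neg)
  finally show ?thesis .
qed

lemma Dt10_double_bracket_eq_0:
  assumes D: "D \<in> Dt10 s mu t" and "t \<noteq> 0" and "t \<noteq> 1"
  shows "D (mu x (mu y z)) = 0"
proof -
  interpret D: Vector_Spaces.linear s s D by (rule Dt10_linear[OF D])
  interpret l: Vector_Spaces.linear s s "mu a" for a by (rule linear_bracket_right)
  define a b c where "a = mu x (mu y z)" and "b = mu y (mu z x)" and "c = mu z (mu x y)"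
  have "mu (D x) (mu y z) = s t (D a)"
    by (simp add: a_def Dt10_bracket[OF D])
  moreover have "mu y (mu z (D x)) = s (t * t) (D b)"
    by (simp add: b_def Dt10_bracket_right[OF D] l.scale)
  moreover have "mu z (mu (D x) y) = s (t * t) (D c)"
    by (simp add: c_def Dt10_bracket[OF D, symmetric] Dt10_bracket_right[OF D] l.scale)
  ultimately have jacobi_D: "s t (D a) + s (t * t) (D b + D c) = 0"
    using jacobi[of "D x" y z] by (simp add: scale_right_distrib add.assoc)
  have "D a + (D b + D c) = 0"
    using arg_cong[OF jacobi[of x y z], of D] by (simp add: a_def b_def c_def D.add add.assoc)
  then have "- D a = D b + D c"
    by (simp add: neg_eq_iff_add_eq_0)
  have "s (t * (1 - t)) (D a) = s t (D a) + s (t * t) (- D a)"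
    by (simp add: right_diff_distrib scale_left_diff_distrib)
  also have "\<dots> = 0"
    using jacobi_D \<open>- D a = D b + D c\<close> by simp
  finally have "s (t * (1 - t)) (D a) = 0" .
  with assms(2,3) show ?thesis
    by (simp add: a_def)
qed

lemma bracket_in_derived_algebra: "mu x y \<in> derived_algebra s mu"
  unfolding derived_algebra_def by (rule span_base) auto

lemma subspace_derived_algebra: "subspace (derived_algebra s mu)"
  by (simp add: derived_algebra_def)

lemma Dt10_derived_bracket_eq_0:
  assumes D: "D \<in> Dt10 s mu t" and "t \<noteq> 0" and "t \<noteq> 1"
    and "u \<in> derived_algebra s mu"
  shows "mu (D u) y = 0"
proof -
  interpret Dy: Vector_Spaces.linear s s "\<lambda>u. mu (D u) y"
    using Vector_Spaces.linear_compose[OF Dt10_linear[OF D] linear_bracket_left]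
    by (simp add: o_def)
  from \<open>u \<in> derived_algebra s mu\<close> have "u \<in> span {mu x y | x y. True}"
    by (simp add: derived_algebra_def)
  then show ?thesis
  proof (induction rule: span_induct)
    case base
    show ?case
      by (simp add: subspace_def Dy.add Dy.scale)
  next
    case (step w)
    interpret D: Vector_Spaces.linear s s D by (rule Dt10_linear[OF D])
    from step obtain a b where "w = mu a b" by auto
    then have "mu (D w) y = - s t (D (mu y (mu a b)))"
      by (simp add: Dt10_bracket[OF D, symmetric] bracket_antisym[of "mu a b" y] D.neg)
    then show ?case
      by (simp add: Dt10_double_bracket_eq_0[OF assms(1-3)])
  qed
qed

lemma centroid_lift_in_centroid:
  assumes D: "D \<in> Dt10 s mu t" and "t \<noteq> 0" and "t \<noteq> 1"
    and Q: "Vector_Spaces.linear s s Q" and Q_range: "range Q \<subseteq> derived_algebra s mu"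
    and Q_id: "\<And>x. x \<in> derived_algebra s mu \<Longrightarrow> Q x = x"
  shows "centroid_lift s Q t D \<in> centroid s mu"
proof -
  interpret D: Vector_Spaces.linear s s D by (rule Dt10_linear[OF D])
  interpret l: Vector_Spaces.linear s s "\<lambda>x. mu x y" for y by (rule linear_bracket_left)
  have DQ: "mu (D (Q x)) y = 0" for x y
    using Dt10_derived_bracket_eq_0[OF assms(1-3)] Q_range by blast
  have "centroid_lift s Q t D (mu x y) = mu (centroid_lift s Q t D x) y" for x y
  proof -
    have "centroid_lift s Q t D (mu x y) = D (mu x y)"
      by (simp add: centroid_lift_def Q_id bracket_in_derived_algebra)
    also have "\<dots> = s (inverse t) (mu (D x) y)"
      using \<open>t \<noteq> 0\<close> by (simp add: Dt10_bracket[OF D, symmetric])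
    also have "\<dots> = s (inverse t) (mu (D (x - Q x)) y)"
      by (simp add: D.diff l.diff DQ)
    also have "\<dots> = mu (centroid_lift s Q t D x) y"
      by (simp add: centroid_lift_def l.add l.scale DQ)
    finally show ?thesis .
  qed
  then show ?thesis
    by (simp add: centroid_def Dt10_def linear_centroid_lift[OF Q D.linear_axioms])
qed

end

theorem theorem3p6:
  fixes s :: "'k::field_char_0 \<Rightarrow> 'v::ab_group_add \<Rightarrow> 'v"
    and mu :: "'v \<Rightarrow> 'v \<Rightarrow> 'v"
    and t :: 'k
  assumes "lie_algebra s mu"
    and "fin_dim s"
    and "derived_algebra s mu \<noteq> UNIV"
    and "t \<noteq> 0" and "t \<noteq> 1"
  shows "\<exists>phi. linear_on_maps s (Dt10 s mu t) phi
              \<and> inj_on phi (Dt10 s mu t)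
              \<and> phi ` Dt10 s mu t \<subseteq> centroid s mu"
proof -
  interpret lie_alg s mu by (rule lie_alg.intro) fact
  obtain Q where Q: "Vector_Spaces.linear s s Q" and Q_range: "range Q \<subseteq> derived_algebra s mu"
    and Q_id: "\<And>x. x \<in> derived_algebra s mu \<Longrightarrow> Q x = x"
    using subspace_linear_projection[OF subspace_derived_algebra] by blast
  have "inj_on (centroid_lift s Q t) {D. Vector_Spaces.linear s s D}"
    using inj_on_centroid_lift[OF \<open>t \<noteq> 0\<close> Q] Q_range Q_id by blast
  then have "inj_on (centroid_lift s Q t) (Dt10 s mu t)"
    by (rule inj_on_subset) (auto simp: Dt10_def)
  moreover have "centroid_lift s Q t ` Dt10 s mu t \<subseteq> centroid s mu"
    using centroid_lift_in_centroid[OF _ \<open>t \<noteq> 0\<close> \<open>t \<noteq> 1\<close> Q Q_range Q_id] by blast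
  ultimately show ?thesis
    using linear_on_maps_centroid_lift by blast
qed

end
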